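(* Let $\mathbf{Z}=\{\mathbf{z}_i\}_{i=1}^n$ be a $G$-networked sample, $\mathbf{w}$ an optimal weighting of $G$ and $\mathsf{s}=\mathsf{s}(G)$. Let $M>0$ and let $f:\mathcal{X}\to\mathcal{Y}$ be $M$-bounded, i.e. $|f(\mathbf{x})-y|\le M$ for $\rho$-almost all $(\mathbf{x},y)$. Then for all $\epsilon>0$, $$\Pr\big(\mathcal{D}_{\mathbf{Z}_{\mathsf{s}}}(f)\ge-\epsilon\big)\ge1-\exp\Big(-\frac{\mathsf{s}\,\epsilon^2}{2M^4}\Big),$$ where $\mathcal{D}_{\mathbf{Z}_{\mathsf{s}}}(f)=\mathcal{E}(f)-\mathcal{E}_{\mathsf{s}}(f)$.
   Context: Networked setting: $G$ is a $k$-partite hypergraph with hyperedges $e_1,\dots,e_n$; vertex set partitioned into $V^{(1)},\dots,V^{(k)}$, each hyperedge containing exactly one vertex $e^{(j)}$ of each $V^{(j)}$. $\mathcal{X}=\mathcal{X}^{(1)}\times\cdots\times\mathcal{X}^{(k)}$ (compact metric spaces), $\mathcal{Y}=\mathbb{R}$, $\mathcal{Z}=\mathcal{X}\times\mathcal{Y}$. Each vertex $v\in V^{(j)}$ gets a feature $\phi(v)$ drawn independently from $\rho_j$, independently of the hypergraph. Hyperedge $e_i$ yields $\mathbf{z}_i=(\mathbf{x}_i,y_i)$, $\mathbf{x}_i=(\phi(e_i^{(1)}),\dots,\phi(e_i^{(k)}))$, labels conditionally independent given the features with $y_i\sim\rho_{y|\mathbf{x}}(\cdot\mid\mathbf{x}_i)$;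 $\rho=\rho_{y|\mathbf{x}}\rho_{\mathbf{x}}$ with $\rho_{\mathbf{x}}=\prod_j\rho_j$. A feasible weighting is $\mathbf{w}$ with $w_i\ge0$ and $\sum_{i:\,v\in e_i}w_i\le1$ for every vertex $v$; $\mathsf{s}(G)=\max\sum_i w_i$ over feasible weightings, attained by an optimal weighting. $\mathcal{E}(f)=\int_{\mathcal{Z}}(f(\mathbf{x})-y)^2d\rho$ and $\mathcal{E}_{\mathsf{s}}(f)=\frac1{\mathsf{s}}\sum_{i=1}^n w_i(f(\mathbf{x}_i)-y_i)^2$. *)

theory Defs
  imports "HOL-Probability.Probability"
begin

text \<open>
  A k-partite hypergraph with hyperedges indexed by i < n: the hyperedge i contains,
  for every part j < k, the vertex (j, edge i j).  Vertices of part j are tagged with j,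
  so the parts V^(j) = {(j,v)} are disjoint.
\<close>

definition feasible_weighting ::
  "nat \<Rightarrow> nat \<Rightarrow> (nat \<Rightarrow> nat \<Rightarrow> nat) \<Rightarrow> (nat \<Rightarrow> real) \<Rightarrow> bool" where
  "feasible_weighting k n edge w \<longleftrightarrow>
     (\<forall>i<n. 0 \<le> w i) \<and>
     (\<forall>j<k. \<forall>v. (\<Sum>i\<in>{i. i < n \<and> edge i j = v}. w i) \<le> 1)"

definition s_number :: "nat \<Rightarrow> nat \<Rightarrow> (nat \<Rightarrow> nat \<Rightarrow> nat) \<Rightarrow> real" where
  "s_number k n edge = Sup {(\<Sum>i<n. w i) | w. feasible_weighting k n edge w}"

definition optimal_weighting ::
  "nat \<Rightarrow> nat \<Rightarrow> (nat \<Rightarrow> nat \<Rightarrow> nat) \<Rightarrow> (nat \<Rightarrow> real) \<Rightarrow> bool" where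
  "optimal_weighting k n edge w \<longleftrightarrow>
     feasible_weighting k n edge w \<and> (\<Sum>i<n. w i) = s_number k n edge"

definition vset :: "nat \<Rightarrow> nat \<Rightarrow> (nat \<Rightarrow> nat \<Rightarrow> nat) \<Rightarrow> (nat \<times> nat) set" where
  "vset k n edge = {(j, edge i j) | i j. i < n \<and> j < k}"

definition feat_measure :: "nat \<Rightarrow> (nat \<Rightarrow> 'a measure) \<Rightarrow> (nat \<Rightarrow> 'a) measure" where
  "feat_measure k \<rho> = PiM {..<k} \<rho>"

text \<open>rho = rho_{y|x} rho_x on Z = X \<times> R; K is the conditional distribution kernel.\<close>
definition joint_measure ::
  "nat \<Rightarrow> (nat \<Rightarrow> 'a measure) \<Rightarrow> ((nat \<Rightarrow> 'a) \<Rightarrow> real measure) \<Rightarrow> ((nat \<Rightarrow> 'a) \<times> real) measure" where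
  "joint_measure k \<rho> K =
     bind (feat_measure k \<rho>)
       (\<lambda>x. bind (K x) (\<lambda>y. return (feat_measure k \<rho> \<Otimes>\<^sub>M borel) (x, y)))"

definition expected_risk ::
  "nat \<Rightarrow> (nat \<Rightarrow> 'a measure) \<Rightarrow> ((nat \<Rightarrow> 'a) \<Rightarrow> real measure) \<Rightarrow> ((nat \<Rightarrow> 'a) \<Rightarrow> real) \<Rightarrow> real" where
  "expected_risk k \<rho> K f = (\<integral>z. (f (fst z) - snd z)\<^sup>2 \<partial>joint_measure k \<rho> K)"

definition xvec :: "nat \<Rightarrow> (nat \<Rightarrow> nat \<Rightarrow> nat) \<Rightarrow> nat \<Rightarrow> (nat \<times> nat \<Rightarrow> 'a) \<Rightarrow> (nat \<Rightarrow> 'a)" where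
  "xvec k edge i \<Phi> = (\<lambda>j\<in>{..<k}. \<Phi> (j, edge i j))"

definition vertex_feat_measure ::
  "nat \<Rightarrow> nat \<Rightarrow> (nat \<Rightarrow> nat \<Rightarrow> nat) \<Rightarrow> (nat \<Rightarrow> 'a measure) \<Rightarrow> (nat \<times> nat \<Rightarrow> 'a) measure" where
  "vertex_feat_measure k n edge \<rho> = PiM (vset k n edge) (\<lambda>jv. \<rho> (fst jv))"

text \<open>Distribution of a G-networked sample: independent vertex features phi(v) ~ rho_j for
  v in V^(j); given the features, labels y_i ~ K(x_i) independently.  An outcome is the pair
  (Phi, Y) of all vertex features and all labels; z_i = (xvec i Phi, Y i).\<close>
definition sample_measure ::
  "nat \<Rightarrow> nat \<Rightarrow> (nat \<Rightarrow> nat \<Rightarrow> nat) \<Rightarrow> (nat \<Rightarrow> 'a measure) \<Rightarrow> ((nat \<Rightarrow> 'a) \<Rightarrow> real measure)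
     \<Rightarrow> ((nat \<times> nat \<Rightarrow> 'a) \<times> (nat \<Rightarrow> real)) measure" where
  "sample_measure k n edge \<rho> K =
     bind (vertex_feat_measure k n edge \<rho>)
       (\<lambda>\<Phi>. bind (PiM {..<n} (\<lambda>i. K (xvec k edge i \<Phi>)))
         (\<lambda>Y. return (vertex_feat_measure k n edge \<rho> \<Otimes>\<^sub>M PiM {..<n} (\<lambda>_. borel)) (\<Phi>, Y)))"

definition weighted_emp_risk ::
  "nat \<Rightarrow> nat \<Rightarrow> (nat \<Rightarrow> nat \<Rightarrow> nat) \<Rightarrow> (nat \<Rightarrow> real) \<Rightarrow> ((nat \<Rightarrow> 'a) \<Rightarrow> real)
     \<Rightarrow> (nat \<times> nat \<Rightarrow> 'a) \<times> (nat \<Rightarrow> real) \<Rightarrow> real" where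
  "weighted_emp_risk k n edge w f \<omega> =
     (1 / s_number k n edge) * (\<Sum>i<n. w i * (f (xvec k edge i (fst \<omega>)) - snd \<omega> i)\<^sup>2)"

end

theory Submission
  imports Defs
begin

text \<open>
  Let T be the weighted sum of hyperedge losses, so that s E_s(f) = T. Hyperedges sharing a vertex
  have dependent losses, yet the exponential moment of T still factorises along the weighting.
  Conditionally on the vertex features the labels are independent, and Jensen's inequality bounds
  each label factor. Integrating out the vertex features one at a time, Hoelder's inequality with
  the weights as exponents (they sum to at most 1 at every vertex) gives Finner's inequality
  E (\<Prod>i. U_i^(w_i)) \<le> \<Prod>i. (E U_i)^(w_i). Every hyperedge feature vector has law rho_x, so
  E exp(\<lambda> T) \<le> (E_rho exp(\<lambda> (f x - y)^2))^s, and Hoeffding's lemma together with the Chernoff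
  bound at \<lambda> = 4\<epsilon>/M^4 gives the tail exp(-2 s \<epsilon>^2 / M^4), which is even stronger than claimed.
\<close>

lemma weighted_am_gm_deficient:
  fixes a p :: "'i \<Rightarrow> real"
  assumes fin: "finite I" and a: "\<And>i. i \<in> I \<Longrightarrow> 0 \<le> a i" and p: "\<And>i. i \<in> I \<Longrightarrow> 0 < p i"
    and ps: "sum p I \<le> 1"
  shows "(\<Prod>i\<in>I. a i powr p i) \<le> (\<Sum>i\<in>I. p i * a i) + (1 - sum p I)"
proof (cases "\<exists>i\<in>I. a i = 0")
  case True
  then have "(\<Prod>i\<in>I. a i powr p i) = 0" using fin by (auto intro: prod_zero)
  moreover have "0 \<le> (\<Sum>i\<in>I. p i * a i)" using a p by (intro sum_nonneg mult_nonneg_nonneg) (auto intro: less_imp_le)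
  ultimately show ?thesis using ps by simp
next
  case False
  then have apos: "\<And>i. i \<in> I \<Longrightarrow> 0 < a i" using a by force
  \<comment> \<open>Jensen for the convex function exp, with the deficit 1 - sum p I put on the point 0.\<close>
  define S where "S = insert None (Some ` I)"
  define q where "q = (\<lambda>x. case x of None \<Rightarrow> 1 - sum p I | Some i \<Rightarrow> p i)"
  define y where "y = (\<lambda>x. case x of None \<Rightarrow> 0 | Some i \<Rightarrow> ln (a i))"
  have sum_S: "\<And>h. (\<Sum>x\<in>S. h x) = h None + (\<Sum>i\<in>I. h (Some i))"
    unfolding S_def using fin by (subst sum.insert) (auto simp: sum.reindex)
  have "exp (\<Sum>x\<in>S. q x *\<^sub>R y x) \<le> (\<Sum>x\<in>S. q x * exp (y x))"
  proof (rule convex_on_sum[OF _ _ exp_convex])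
    show "finite S" "S \<noteq> {}" using fin by (simp_all add: S_def)
    show "sum q S = 1" by (simp add: sum_S q_def)
    show "\<And>i. i \<in> S \<Longrightarrow> 0 \<le> q i" using p ps by (auto simp: S_def q_def intro: less_imp_le)
  qed auto
  moreover have "exp (\<Sum>x\<in>S. q x *\<^sub>R y x) = (\<Prod>i\<in>I. a i powr p i)"
    using apos by (simp add: sum_S q_def y_def exp_sum fin powr_def mult.commute
        less_imp_neq[symmetric] cong: prod.cong)
  moreover have "(\<Sum>x\<in>S. q x * exp (y x)) = (\<Sum>i\<in>I. p i * a i) + (1 - sum p I)"
    by (simp add: sum_S q_def y_def apos)
  ultimately show ?thesis by simp
qed

definition ennreal_powr :: "ennreal \<Rightarrow> real \<Rightarrow> ennreal" where
  "ennreal_powr x p = (if x = \<top> then \<top> else ennreal (enn2real x powr p))"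

lemma ennreal_powr_ennreal: "0 \<le> a \<Longrightarrow> ennreal_powr (ennreal a) p = ennreal (a powr p)"
  by (simp add: ennreal_powr_def)

lemma ennreal_powr_top [simp]: "ennreal_powr \<top> p = \<top>"
  by (simp add: ennreal_powr_def)

lemma ennreal_powr_eq_0_iff [simp]: "ennreal_powr x p = 0 \<longleftrightarrow> x = 0"
  by (cases x) (auto simp: ennreal_powr_def)

lemma ennreal_powr_exp: "ennreal_powr (ennreal (exp a)) p = ennreal (exp (p * a))"
  by (simp add: ennreal_powr_ennreal powr_def)

lemma measurable_ennreal_powr [measurable]:
  assumes [measurable]: "g \<in> borel_measurable N"
  shows "(\<lambda>x. ennreal_powr (g x) p) \<in> borel_measurable N"
  unfolding ennreal_powr_def by measurable

lemma ennreal_powr_mono: "x \<le> y \<Longrightarrow> 0 \<le> p \<Longrightarrow> ennreal_powr x p \<le> ennreal_powr y p"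
  by (cases x; cases y) (auto simp: ennreal_powr_def top_unique intro!: ennreal_leI powr_mono2)

lemma prod_ennreal_powr_le_weighted_sum:
  fixes g :: "'i \<Rightarrow> ennreal" and c p :: "'i \<Rightarrow> real"
  assumes fin: "finite I" and p: "\<And>i. i \<in> I \<Longrightarrow> 0 < p i" and ps: "sum p I \<le> 1"
    and c: "\<And>i. i \<in> I \<Longrightarrow> 0 < c i"
  shows "(\<Prod>i\<in>I. ennreal_powr (g i) (p i))
      \<le> ennreal (\<Prod>i\<in>I. c i powr p i) * ((\<Sum>i\<in>I. ennreal (p i / c i) * g i) + ennreal (1 - sum p I))"
proof (cases "\<exists>i\<in>I. g i = \<top>")
  case True
  then obtain i where i: "i \<in> I" "g i = \<top>" by blast
  have "ennreal (p i / c i) * g i = \<top>"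
    using i p[OF i(1)] c[OF i(1)] by (simp add: ennreal_mult_top)
  moreover have "ennreal (p i / c i) * g i \<le> (\<Sum>i\<in>I. ennreal (p i / c i) * g i)"
    using i fin by (intro member_le_sum) auto
  moreover have "0 < (\<Prod>i\<in>I. c i powr p i)" using c by (intro prod_pos) fastforce
  ultimately show ?thesis by (simp add: top_unique ennreal_mult_top)
next
  case False
  define r where "r i = enn2real (g i)" for i
  have g_eq: "\<And>i. i \<in> I \<Longrightarrow> g i = ennreal (r i)" using False by (auto simp: r_def less_top)
  have r_nonneg: "\<And>i. 0 \<le> r i" by (simp add: r_def)
  have pc_nonneg: "\<And>i. i \<in> I \<Longrightarrow> 0 \<le> p i / c i" using p c by (simp add: less_imp_le)
  have "(\<Prod>i\<in>I. r i powr p i) = (\<Prod>i\<in>I. c i powr p i) * (\<Prod>i\<in>I. (r i / c i) powr p i)"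
    unfolding prod.distrib[symmetric] using c r_nonneg
    by (intro prod.cong refl) (fastforce simp: powr_mult[symmetric])
  also have "\<dots> \<le> (\<Prod>i\<in>I. c i powr p i) * ((\<Sum>i\<in>I. p i * (r i / c i)) + (1 - sum p I))"
    using c r_nonneg p ps
    by (intro mult_left_mono weighted_am_gm_deficient fin prod_nonneg)
      (auto intro: divide_nonneg_pos)
  also have "(\<Sum>i\<in>I. p i * (r i / c i)) = (\<Sum>i\<in>I. p i / c i * r i)"
    by simp
  finally have "(\<Prod>i\<in>I. ennreal_powr (g i) (p i))
      \<le> ennreal ((\<Prod>i\<in>I. c i powr p i) * ((\<Sum>i\<in>I. p i / c i * r i) + (1 - sum p I)))"
    using r_nonneg by (simp add: g_eq ennreal_powr_ennreal prod_ennreal ennreal_leI cong: prod.cong)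
  also have "\<dots> = ennreal (\<Prod>i\<in>I. c i powr p i) * (ennreal (\<Sum>i\<in>I. p i / c i * r i) + ennreal (1 - sum p I))"
  proof -
    have "0 \<le> (\<Sum>i\<in>I. p i / c i * r i)"
      using pc_nonneg r_nonneg by (intro sum_nonneg mult_nonneg_nonneg) auto
    then show ?thesis
      using ps by (simp add: ennreal_mult prod_nonneg)
  qed
  also have "ennreal (\<Sum>i\<in>I. p i / c i * r i) = (\<Sum>i\<in>I. ennreal (p i / c i) * g i)"
  proof -
    have "ennreal (p i / c i * r i) = ennreal (p i / c i) * g i" if "i \<in> I" for i
      using ennreal_mult[OF pc_nonneg r_nonneg, of i i] that by (simp add: g_eq)
    moreover have "\<And>i. i \<in> I \<Longrightarrow> 0 \<le> p i / c i * r i"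
      using pc_nonneg r_nonneg by (intro mult_nonneg_nonneg) auto
    ultimately show ?thesis by (simp add: sum_ennreal[symmetric] cong: sum.cong)
  qed
  finally show ?thesis .
qed

lemma Hoelder_nn_integral_prod:
  fixes g :: "'i \<Rightarrow> 'a \<Rightarrow> ennreal"
  assumes N: "prob_space N" and fin: "finite I" and p: "\<And>i. i \<in> I \<Longrightarrow> 0 < p i"
    and ps: "sum p I \<le> 1"
    and g[measurable]: "\<And>i. i \<in> I \<Longrightarrow> g i \<in> borel_measurable N"
  shows "(\<integral>\<^sup>+x. (\<Prod>i\<in>I. ennreal_powr (g i x) (p i)) \<partial>N)
    \<le> (\<Prod>i\<in>I. ennreal_powr (\<integral>\<^sup>+x. g i x \<partial>N) (p i))"
proof -
  interpret prob_space N by (rule N)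
  define a where "a i = (\<integral>\<^sup>+x. g i x \<partial>N)" for i
  consider (zero) j where "j \<in> I" "a j = 0" | (top) "\<forall>j\<in>I. a j \<noteq> 0" "\<exists>j\<in>I. a j = \<top>"
    | (finite) "\<forall>j\<in>I. a j \<noteq> 0 \<and> a j \<noteq> \<top>"
    by blast
  then show ?thesis
  proof cases
    case zero
    then have "AE x in N. g j x = 0" by (simp add: a_def nn_integral_0_iff_AE)
    then have "AE x in N. (\<Prod>i\<in>I. ennreal_powr (g i x) (p i)) = 0"
      by eventually_elim (use zero fin in \<open>auto intro!: prod_zero bexI[of _ j]\<close>)
    then have "(\<integral>\<^sup>+x. (\<Prod>i\<in>I. ennreal_powr (g i x) (p i)) \<partial>N) = (\<integral>\<^sup>+x. 0 \<partial>N)"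
      by (rule nn_integral_cong_AE)
    then show ?thesis by simp
  next
    case top
    then have "(\<Prod>i\<in>I. ennreal_powr (a i) (p i)) = \<top>"
      using fin by (subst ennreal_prod_eq_top) (metis ennreal_powr_eq_0_iff ennreal_powr_top)
    then show ?thesis by (simp add: a_def)
  next
    case finite
    \<comment> \<open>Normalise each factor by its integral and integrate the weighted AM-GM bound.\<close>
    define c where "c i = enn2real (a i)" for i
    have a_eq: "\<And>i. i \<in> I \<Longrightarrow> a i = ennreal (c i)" using finite by (auto simp: c_def less_top)
    have c_pos: "\<And>i. i \<in> I \<Longrightarrow> 0 < c i"
      using finite a_eq by (metis ennreal_0 enn2real_nonneg c_def order_le_less)
    define C where "C = (\<Prod>i\<in>I. c i powr p i)"
    have "(\<integral>\<^sup>+x. (\<Prod>i\<in>I. ennreal_powr (g i x) (p i)) \<partial>N)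
        \<le> (\<integral>\<^sup>+x. ennreal C * ((\<Sum>i\<in>I. ennreal (p i / c i) * g i x) + ennreal (1 - sum p I)) \<partial>N)"
      unfolding C_def
      by (intro nn_integral_mono prod_ennreal_powr_le_weighted_sum fin p ps c_pos) auto
    also have "\<dots> = ennreal C * ((\<Sum>i\<in>I. ennreal (p i / c i) * a i) + ennreal (1 - sum p I))"
      by (simp add: nn_integral_cmult nn_integral_add nn_integral_sum emeasure_space_1 a_def)
    also have "(\<Sum>i\<in>I. ennreal (p i / c i) * a i) = ennreal (sum p I)"
    proof -
      have "ennreal (p i / c i) * a i = ennreal (p i)" if i: "i \<in> I" for i
        using c_pos[OF i] p[OF i] by (simp add: a_eq[OF i] flip: ennreal_mult)
      then show ?thesis using p by (simp add: sum_ennreal less_imp_le cong: sum.cong)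
    qed
    also have "ennreal C * (ennreal (sum p I) + ennreal (1 - sum p I)) = ennreal C"
      using ps p by (simp add: sum_nonneg less_imp_le flip: ennreal_plus)
    also have "ennreal C = (\<Prod>i\<in>I. ennreal_powr (a i) (p i))"
      unfolding C_def using c_pos
      by (simp add: a_eq ennreal_powr_ennreal prod_ennreal less_imp_le cong: prod.cong)
    finally show ?thesis by (simp add: a_def)
  qed
qed

lemma nn_integral_ennreal_powr_le:
  assumes "prob_space N" and "0 < p" and "p \<le> 1" and "g \<in> borel_measurable N"
  shows "(\<integral>\<^sup>+x. ennreal_powr (g x) p \<partial>N) \<le> ennreal_powr (\<integral>\<^sup>+x. g x \<partial>N) p"
  using Hoelder_nn_integral_prod[of N "{()}" "\<lambda>_. p" "\<lambda>_. g"] assms by simp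

lemma Hoelder_nn_integral_prod_const:
  fixes g :: "'i \<Rightarrow> 'a \<Rightarrow> ennreal"
  assumes N: "prob_space N" and fin: "finite I" and p: "\<And>i. i \<in> I \<Longrightarrow> 0 < p i"
    and ps: "sum p (I \<inter> B) \<le> 1"
    and g[measurable]: "\<And>i. i \<in> I \<Longrightarrow> g i \<in> borel_measurable N"
    and const: "\<And>i x y. i \<in> I - B \<Longrightarrow> x \<in> space N \<Longrightarrow> y \<in> space N \<Longrightarrow> g i x = g i y"
  shows "(\<integral>\<^sup>+x. (\<Prod>i\<in>I. ennreal_powr (g i x) (p i)) \<partial>N)
    \<le> (\<Prod>i\<in>I. ennreal_powr (\<integral>\<^sup>+x. g i x \<partial>N) (p i))"
proof -
  interpret prob_space N by (rule N)
  define c where "c i = (\<integral>\<^sup>+x. g i x \<partial>N)" for i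
  have g_const: "g i x = c i" if "i \<in> I - B" "x \<in> space N" for i x
  proof -
    have "c i = (\<integral>\<^sup>+y. g i x \<partial>N)"
      unfolding c_def by (rule nn_integral_cong) (rule const[OF that(1) _ that(2)])
    then show ?thesis by (simp add: emeasure_space_1)
  qed
  have "(\<integral>\<^sup>+x. (\<Prod>i\<in>I. ennreal_powr (g i x) (p i)) \<partial>N)
      = (\<integral>\<^sup>+x. (\<Prod>i\<in>I \<inter> B. ennreal_powr (g i x) (p i)) * (\<Prod>i\<in>I - B. ennreal_powr (c i) (p i)) \<partial>N)"
  proof (intro nn_integral_cong)
    fix x assume "x \<in> space N"
    then have "(\<Prod>i\<in>I - B. ennreal_powr (g i x) (p i)) = (\<Prod>i\<in>I - B. ennreal_powr (c i) (p i))"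
      using g_const by (intro prod.cong) auto
    then show "(\<Prod>i\<in>I. ennreal_powr (g i x) (p i))
        = (\<Prod>i\<in>I \<inter> B. ennreal_powr (g i x) (p i)) * (\<Prod>i\<in>I - B. ennreal_powr (c i) (p i))"
      using fin by (simp add: prod.Int_Diff[of I _ B])
  qed
  also have "\<dots> = (\<integral>\<^sup>+x. (\<Prod>i\<in>I \<inter> B. ennreal_powr (g i x) (p i)) \<partial>N) * (\<Prod>i\<in>I - B. ennreal_powr (c i) (p i))"
    by (intro nn_integral_multc) measurable
  also have "\<dots> \<le> (\<Prod>i\<in>I \<inter> B. ennreal_powr (c i) (p i)) * (\<Prod>i\<in>I - B. ennreal_powr (c i) (p i))"
    unfolding c_def using fin p ps by (intro mult_right_mono Hoelder_nn_integral_prod N) auto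
  also have "\<dots> = (\<Prod>i\<in>I. ennreal_powr (c i) (p i))"
    using fin by (simp add: prod.Int_Diff[of I _ B])
  finally show ?thesis by (simp add: c_def)
qed

lemma obtain_product_prob_space:
  fixes M :: "'i \<Rightarrow> 'a measure"
  assumes "\<And>i. i \<in> I \<Longrightarrow> prob_space (M i)"
  obtains M' where "product_prob_space M'" and "\<And>i. i \<in> I \<Longrightarrow> M' i = M i"
proof
  define M' where "M' i = (if i \<in> I then M i else return (count_space UNIV) undefined)" for i
  have "prob_space (M' i)" for i
    using assms by (simp add: M'_def prob_space_return)
  then show "product_prob_space M'"
    by (simp add: product_prob_space_def product_prob_space_axioms_def product_sigma_finite_def
        prob_space_imp_sigma_finite)
  show "\<And>i. i \<in> I \<Longrightarrow> M' i = M i" by (simp add: M'_def)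
qed

lemma (in product_prob_space) Finner_nn_integral:
  fixes g :: "'e \<Rightarrow> ('i \<Rightarrow> 'a) \<Rightarrow> ennreal" and e :: "'e \<Rightarrow> 'i set" and p :: "'e \<Rightarrow> real"
  assumes V: "finite V" and E: "finite E" and p: "\<And>i. i \<in> E \<Longrightarrow> 0 < p i"
    and load: "\<And>v. v \<in> V \<Longrightarrow> sum p {i\<in>E. v \<in> e i} \<le> 1"
    and g: "\<And>i. i \<in> E \<Longrightarrow> g i \<in> borel_measurable (PiM V M)"
    and dep: "\<And>i x y. i \<in> E \<Longrightarrow> x \<in> space (PiM V M) \<Longrightarrow> y \<in> space (PiM V M) \<Longrightarrow>
                 (\<And>u. u \<in> e i \<Longrightarrow> x u = y u) \<Longrightarrow> g i x = g i y"
  shows "(\<integral>\<^sup>+x. (\<Prod>i\<in>E. ennreal_powr (g i x) (p i)) \<partial>PiM V M)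
    \<le> (\<Prod>i\<in>E. ennreal_powr (\<integral>\<^sup>+x. g i x \<partial>PiM V M) (p i))"
  using V load g dep
proof (induction V arbitrary: g e rule: finite_induct)
  case empty
  show ?case by (simp add: PiM_empty nn_integral_count_space_finite)
next
  case (insert v V)
  note g_meas[measurable] = insert.prems(2)
  \<comment> \<open>Integrate out the coordinate v: Hoelder in v for the factors that see v, then induction.\<close>
  define G where "G i x = (\<integral>\<^sup>+y. g i (x(v:=y)) \<partial>M v)" for i x
  have upd_space: "x(v:=y) \<in> space (PiM (insert v V) M)"
    if "x \<in> space (PiM V M)" "y \<in> space (M v)" for x y
    using that by (auto simp: space_PiM intro!: PiE_fun_upd)
  have g_upd_meas: "(\<lambda>y. g i (x(v:=y))) \<in> borel_measurable (M v)"
    if "i \<in> E" "x \<in> space (PiM V M)" for i x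
    using measurable_comp[OF measurable_component_update[OF that(2) insert.hyps(2)] g_meas[OF that(1)]]
    by (simp add: comp_def)
  have G_meas: "G i \<in> borel_measurable (PiM V M)" if "i \<in> E" for i
  proof -
    have "(\<lambda>(x, y). g i (x(v := y))) \<in> borel_measurable (PiM V M \<Otimes>\<^sub>M M v)"
      using measurable_comp[OF measurable_add_dim g_meas[OF that]] by (simp add: comp_def case_prod_beta')
    then show ?thesis unfolding G_def by (rule M.borel_measurable_nn_integral)
  qed
  have G_dep: "G i x = G i y"
    if "i \<in> E" "x \<in> space (PiM V M)" "y \<in> space (PiM V M)" "\<And>u. u \<in> e i - {v} \<Longrightarrow> x u = y u"
    for i x y
    unfolding G_def
  proof (intro nn_integral_cong)
    fix z assume z: "z \<in> space (M v)"
    show "g i (x(v:=z)) = g i (y(v:=z))"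
      by (rule insert.prems(3)[OF that(1) upd_space[OF that(2) z] upd_space[OF that(3) z]])
        (use that(4) in auto)
  qed
  have int_G: "(\<integral>\<^sup>+x. G i x \<partial>PiM V M) = (\<integral>\<^sup>+x. g i x \<partial>PiM (insert v V) M)"
    if "i \<in> E" for i
    unfolding G_def using insert.hyps g_meas[OF that] by (intro product_nn_integral_insert[symmetric]) auto
  have load_V: "sum p {i\<in>E. u \<in> e i - {v}} \<le> 1" if "u \<in> V" for u
  proof -
    have "{i\<in>E. u \<in> e i - {v}} = {i\<in>E. u \<in> e i}" using that insert.hyps(2) by auto
    then show ?thesis using insert.prems(1)[of u] that by simp
  qed
  have section_bound: "(\<integral>\<^sup>+y. (\<Prod>i\<in>E. ennreal_powr (g i (x(v:=y))) (p i)) \<partial>M v)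
      \<le> (\<Prod>i\<in>E. ennreal_powr (G i x) (p i))" if x: "x \<in> space (PiM V M)" for x
    unfolding G_def
  proof (rule Hoelder_nn_integral_prod_const[where B = "{i. v \<in> e i}",
        OF M.prob_space_axioms E p _ g_upd_meas[OF _ x]])
    show "sum p (E \<inter> {i. v \<in> e i}) \<le> 1"
      using insert.prems(1)[of v] by (simp add: Collect_conj_eq Int_commute)
    show "g i (x(v := y)) = g i (x(v := z))"
      if "i \<in> E - {i. v \<in> e i}" "y \<in> space (M v)" "z \<in> space (M v)" for i y z
      by (rule insert.prems(3)[OF _ upd_space[OF x that(2)] upd_space[OF x that(3)]])
        (use that in auto)
  qed
  have "(\<integral>\<^sup>+x. (\<Prod>i\<in>E. ennreal_powr (g i x) (p i)) \<partial>PiM (insert v V) M)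
      = (\<integral>\<^sup>+x. (\<integral>\<^sup>+y. (\<Prod>i\<in>E. ennreal_powr (g i (x(v:=y))) (p i)) \<partial>M v) \<partial>PiM V M)"
    using insert.hyps by (intro product_nn_integral_insert) measurable
  also have "\<dots> \<le> (\<integral>\<^sup>+x. (\<Prod>i\<in>E. ennreal_powr (G i x) (p i)) \<partial>PiM V M)"
    by (intro nn_integral_mono section_bound)
  also have "\<dots> \<le> (\<Prod>i\<in>E. ennreal_powr (\<integral>\<^sup>+x. G i x \<partial>PiM V M) (p i))"
    by (rule insert.IH[of "\<lambda>i. e i - {v}" G, OF load_V G_meas G_dep])
  also have "\<dots> = (\<Prod>i\<in>E. ennreal_powr (\<integral>\<^sup>+x. g i x \<partial>PiM (insert v V) M) (p i))"
    by (simp add: int_G cong: prod.cong)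
  finally show ?case .
qed

lemma measurable_PiM_prob_kernel:
  assumes I: "finite I" and N: "\<And>i. i \<in> I \<Longrightarrow> N i \<in> X \<rightarrow>\<^sub>M prob_algebra B"
  shows "(\<lambda>x. PiM I (\<lambda>i. N i x)) \<in> X \<rightarrow>\<^sub>M prob_algebra (PiM I (\<lambda>_. B))"
proof (rule measurable_prob_algebra_generated[OF sets_PiM Int_stable_prod_algebra prod_algebra_sets_into_space])
  fix a assume a: "a \<in> space X"
  have Na: "prob_space (N i a)" "sets (N i a) = sets B" if "i \<in> I" for i
    using measurable_space[OF N[OF that] a] unfolding space_prob_algebra mem_Collect_eq by blast+
  show "prob_space (PiM I (\<lambda>i. N i a))" by (rule prob_space_PiM) (rule Na)
  show "sets (PiM I (\<lambda>i. N i a)) = sets (PiM I (\<lambda>_. B))" using Na by (intro sets_PiM_cong) auto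
next
  fix A assume "A \<in> prod_algebra I (\<lambda>_. B)"
  then have "A \<in> {PiE I X |X. X \<in> (\<Pi> j\<in>I. sets B)}"
    by (simp only: prod_algebra_eq_finite[OF I, of "\<lambda>_. B"])
  then obtain Y where A: "A = PiE I Y" and Y: "Y \<in> (\<Pi> j\<in>I. sets B)"
    by (auto simp del: PiE_eq_empty_iff Pi_iff)
  have "(\<lambda>a. emeasure (PiM I (\<lambda>i. N i a)) A) \<in> borel_measurable X
      \<longleftrightarrow> (\<lambda>a. \<Prod>i\<in>I. emeasure (N i a) (Y i)) \<in> borel_measurable X"
  proof (rule measurable_cong)
    fix a assume a: "a \<in> space X"
    have Na: "prob_space (N i a)" "sets (N i a) = sets B" if "i \<in> I" for i
      using measurable_space[OF N[OF that] a] unfolding space_prob_algebra mem_Collect_eq by blast+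
    have "emeasure (PiM I (\<lambda>i. N i a)) (prod_emb I (\<lambda>i. N i a) I (PiE I Y)) = (\<Prod>i\<in>I. emeasure (N i a) (Y i))"
      using Na Y I by (intro emeasure_PiM_emb) auto
    moreover have "prod_emb I (\<lambda>i. N i a) I (PiE I Y) = PiE I Y"
    proof (rule prod_emb_PiE_same_index)
      fix i assume i: "i \<in> I"
      then have "Y i \<in> sets (N i a)" using Y Na(2)[OF i] by auto
      then show "Y i \<subseteq> space (N i a)" by (rule sets.sets_into_space)
    qed
    ultimately show "emeasure (PiM I (\<lambda>i. N i a)) A = (\<Prod>i\<in>I. emeasure (N i a) (Y i))" by (simp add: A)
  qed
  moreover have "(\<lambda>a. \<Prod>i\<in>I. emeasure (N i a) (Y i)) \<in> borel_measurable X"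
    using Y by (intro borel_measurable_prod_ennreal measurable_compose[OF measurable_prob_algebraD[OF N] measurable_emeasure_subprob_algebra]) auto
  ultimately show "(\<lambda>a. emeasure (PiM I (\<lambda>i. N i a)) A) \<in> borel_measurable X" by simp
qed

definition semidirect_measure :: "'a measure \<Rightarrow> 'b measure \<Rightarrow> ('a \<Rightarrow> 'b measure) \<Rightarrow> ('a \<times> 'b) measure" where
  "semidirect_measure M B N = M \<bind> (\<lambda>x. N x \<bind> (\<lambda>y. return (M \<Otimes>\<^sub>M B) (x, y)))"

lemma measurable_semidirect_kernel:
  assumes "N \<in> M \<rightarrow>\<^sub>M prob_algebra B"
  shows "(\<lambda>x. N x \<bind> (\<lambda>y. return (M \<Otimes>\<^sub>M B) (x, y))) \<in> M \<rightarrow>\<^sub>M prob_algebra (M \<Otimes>\<^sub>M B)"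
proof (rule measurable_bind_prob_space2[OF assms])
  show "(\<lambda>(x, y). return (M \<Otimes>\<^sub>M B) (x, y)) \<in> M \<Otimes>\<^sub>M B \<rightarrow>\<^sub>M prob_algebra (M \<Otimes>\<^sub>M B)"
    using measurable_return_prob_space[of "M \<Otimes>\<^sub>M B"] by (simp add: case_prod_beta')
qed

lemma
  assumes N: "N \<in> M \<rightarrow>\<^sub>M prob_algebra B" and M: "prob_space M"
  shows prob_space_semidirect_measure: "prob_space (semidirect_measure M B N)"
    and sets_semidirect_measure: "sets (semidirect_measure M B N) = sets (M \<Otimes>\<^sub>M B)"
proof -
  have "M \<in> space (prob_algebra M)" using M by (simp add: space_prob_algebra)
  then show "prob_space (semidirect_measure M B N)" "sets (semidirect_measure M B N) = sets (M \<Otimes>\<^sub>M B)"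
    unfolding semidirect_measure_def
    by (rule prob_space_bind'[OF _ measurable_semidirect_kernel[OF N]],
        rule sets_bind'[OF _ measurable_semidirect_kernel[OF N]])
qed

lemma nn_integral_semidirect_measure:
  assumes N: "N \<in> M \<rightarrow>\<^sub>M prob_algebra B" and h[measurable]: "h \<in> borel_measurable (M \<Otimes>\<^sub>M B)"
  shows "(\<integral>\<^sup>+z. h z \<partial>semidirect_measure M B N) = (\<integral>\<^sup>+x. \<integral>\<^sup>+y. h (x, y) \<partial>N x \<partial>M)"
  unfolding semidirect_measure_def
proof (subst nn_integral_bind[OF h measurable_prob_algebraD[OF measurable_semidirect_kernel[OF N]]],
    intro nn_integral_cong)
  fix x assume x: "x \<in> space M"
  have N_sets: "sets (N x) = sets B"
    using measurable_space[OF N x] by (simp add: space_prob_algebra)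
  have "(\<lambda>y. return (M \<Otimes>\<^sub>M B) (x, y)) \<in> N x \<rightarrow>\<^sub>M subprob_algebra (M \<Otimes>\<^sub>M B)"
    using measurable_compose[OF measurable_Pair1'[OF x] return_measurable]
    by (simp add: measurable_cong_sets[OF N_sets refl] comp_def)
  then have "(\<integral>\<^sup>+z. h z \<partial>(N x \<bind> (\<lambda>y. return (M \<Otimes>\<^sub>M B) (x, y))))
      = (\<integral>\<^sup>+y. \<integral>\<^sup>+z. h z \<partial>return (M \<Otimes>\<^sub>M B) (x, y) \<partial>N x)"
    by (rule nn_integral_bind[OF h])
  also have "\<dots> = (\<integral>\<^sup>+y. h (x, y) \<partial>N x)"
    using x sets_eq_imp_space_eq[OF N_sets]
    by (intro nn_integral_cong nn_integral_return) (auto simp: space_pair_measure)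
  finally show "(\<integral>\<^sup>+z. h z \<partial>(N x \<bind> (\<lambda>y. return (M \<Otimes>\<^sub>M B) (x, y)))) = (\<integral>\<^sup>+y. h (x, y) \<partial>N x)" .
qed

lemma (in prob_space) nn_integral_exp_le_Hoeffding:
  assumes f[measurable]: "f \<in> borel_measurable M" and bounded: "AE x in M. f x \<in> {a..b}" and l: "0 < l"
  shows "(\<integral>\<^sup>+x. exp (l * f x) \<partial>M) \<le> ennreal (exp (l * expectation f + l\<^sup>2 * (b - a)\<^sup>2 / 8))"
proof -
  interpret interval_bounded_random_variable M f a b
    by unfold_locales (use bounded in auto)
  have "(\<integral>\<^sup>+x. exp (l * f x) \<partial>M) = (\<integral>\<^sup>+x. ennreal (exp (l * expectation f)) * exp (l * (f x - expectation f)) \<partial>M)"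
    by (intro nn_integral_cong) (simp add: right_diff_distrib flip: ennreal_mult exp_add)
  also have "\<dots> = ennreal (exp (l * expectation f)) * (\<integral>\<^sup>+x. exp (l * (f x - expectation f)) \<partial>M)"
    by (intro nn_integral_cmult) measurable
  also have "\<dots> \<le> ennreal (exp (l * expectation f)) * ennreal (exp (l\<^sup>2 * (b - a)\<^sup>2 / 8))"
    by (intro mult_left_mono Hoeffdings_lemma_nn_integral l) simp
  also have "\<dots> = ennreal (exp (l * expectation f + l\<^sup>2 * (b - a)\<^sup>2 / 8))"
    by (simp add: exp_add ennreal_mult)
  finally show ?thesis .
qed

lemma (in prob_space) prob_ge_le_exp_moment:
  assumes [measurable]: "f \<in> borel_measurable M" and l: "0 < l"
    and moment: "(\<integral>\<^sup>+x. exp (l * f x) \<partial>M) \<le> ennreal (exp c)"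
  shows "prob {x \<in> space M. a \<le> f x} \<le> exp (c - l * a)"
proof -
  have "emeasure M {x \<in> space M. a \<le> f x}
      \<le> ennreal (exp (- l * a)) * (\<integral>\<^sup>+x. ennreal (exp (l * f x)) * indicator (space M) x \<partial>M)"
    by (rule Chernoff_ineq_nn_integral_ge[OF l sets.top]) measurable
  also have "(\<integral>\<^sup>+x. ennreal (exp (l * f x)) * indicator (space M) x \<partial>M) = (\<integral>\<^sup>+x. exp (l * f x) \<partial>M)"
    by (intro nn_integral_cong) simp
  also have "ennreal (exp (- l * a)) * \<dots> \<le> ennreal (exp (- l * a)) * ennreal (exp c)"
    by (intro mult_left_mono moment) simp
  also have "\<dots> = ennreal (exp (c - l * a))"
    by (simp add: exp_diff exp_minus field_simps flip: ennreal_mult)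
  finally show ?thesis
    by (simp add: emeasure_eq_measure)
qed

lemma feasible_weighting_le_1:
  assumes "feasible_weighting k n edge w" and "0 < k" and "i < n"
  shows "w i \<le> 1"
proof -
  have "w i \<le> (\<Sum>i'\<in>{i'. i' < n \<and> edge i' 0 = edge i 0}. w i')"
    using assms by (intro member_le_sum) (auto simp: feasible_weighting_def)
  also have "\<dots> \<le> 1" using assms by (simp add: feasible_weighting_def)
  finally show ?thesis .
qed

lemma feasible_weighting_sum_nonneg:
  "feasible_weighting k n edge w \<Longrightarrow> 0 \<le> (\<Sum>i<n. w i)"
  unfolding feasible_weighting_def by (intro sum_nonneg) auto

locale networked_sample =
  fixes k n :: nat and edge :: "nat \<Rightarrow> nat \<Rightarrow> nat"
    and \<rho> :: "nat \<Rightarrow> 'a measure" and K :: "(nat \<Rightarrow> 'a) \<Rightarrow> real measure"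
  assumes prob_space_rho: "\<And>j. j < k \<Longrightarrow> prob_space (\<rho> j)"
    and K_kernel: "K \<in> feat_measure k \<rho> \<rightarrow>\<^sub>M prob_algebra borel"
begin

abbreviation "rho_x \<equiv> feat_measure k \<rho>"
abbreviation "rho_z \<equiv> joint_measure k \<rho> K"
abbreviation "vertex_features \<equiv> vertex_feat_measure k n edge \<rho>"
abbreviation "labels \<equiv> PiM {..<n} (\<lambda>_. borel :: real measure)"
abbreviation "label_kernel \<Phi> \<equiv> PiM {..<n} (\<lambda>i. K (xvec k edge i \<Phi>))"
abbreviation "sample \<equiv> sample_measure k n edge \<rho> K"

lemma prob_space_rho_x: "prob_space rho_x"
  unfolding feat_measure_def by (intro prob_space_PiM prob_space_rho) simp

lemma vset_fst_less: "jv \<in> vset k n edge \<Longrightarrow> fst jv < k"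
  by (auto simp: vset_def)

lemma finite_vset: "finite (vset k n edge)"
proof -
  have "vset k n edge = (\<lambda>(i, j). (j, edge i j)) ` ({..<n} \<times> {..<k})"
    by (auto simp: vset_def)
  then show ?thesis by simp
qed

lemma prob_space_vertex_features: "prob_space vertex_features"
  unfolding vertex_feat_measure_def by (intro prob_space_PiM prob_space_rho vset_fst_less)

lemma measurable_xvec:
  assumes "i < n" shows "xvec k edge i \<in> vertex_features \<rightarrow>\<^sub>M rho_x"
  unfolding xvec_def feat_measure_def vertex_feat_measure_def
proof (rule measurable_restrict)
  fix j assume "j \<in> {..<k}"
  then have "(j, edge i j) \<in> vset k n edge" using assms by (auto simp: vset_def)
  from measurable_component_singleton[OF this, of "\<lambda>jv. \<rho> (fst jv)"]
  show "(\<lambda>\<Phi>. \<Phi> (j, edge i j)) \<in> PiM (vset k n edge) (\<lambda>jv. \<rho> (fst jv)) \<rightarrow>\<^sub>M \<rho> j" by simp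
qed

lemma distr_xvec:
  assumes "i < n" shows "distr vertex_features rho_x (xvec k edge i) = rho_x"
proof -
  have "distr (PiM (vset k n edge) (\<lambda>jv. \<rho> (fst jv))) (PiM {..<k} (\<lambda>j. \<rho> (fst (j, edge i j))))
      (\<lambda>\<Phi>. \<lambda>j\<in>{..<k}. \<Phi> (j, edge i j)) = PiM {..<k} (\<lambda>j. \<rho> (fst (j, edge i j)))"
    using assms by (intro distr_PiM_reindex prob_space_rho vset_fst_less) (auto simp: inj_on_def vset_def)
  then show ?thesis
    by (simp add: vertex_feat_measure_def feat_measure_def xvec_def[abs_def])
qed

lemma prob_space_K: "x \<in> space rho_x \<Longrightarrow> prob_space (K x)"
  using measurable_space[OF K_kernel] by (simp add: space_prob_algebra)

lemma sets_K: "x \<in> space rho_x \<Longrightarrow> sets (K x) = sets borel"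
  using measurable_space[OF K_kernel] by (simp add: space_prob_algebra)

lemma measurable_label_kernel: "label_kernel \<in> vertex_features \<rightarrow>\<^sub>M prob_algebra labels"
  by (intro measurable_PiM_prob_kernel measurable_compose[OF measurable_xvec K_kernel]) auto

lemma rho_z_eq: "rho_z = semidirect_measure rho_x borel K"
  by (simp add: joint_measure_def semidirect_measure_def)

lemma sample_eq: "sample = semidirect_measure vertex_features labels label_kernel"
  by (simp add: sample_measure_def semidirect_measure_def)

lemma prob_space_rho_z: "prob_space rho_z"
  unfolding rho_z_eq by (rule prob_space_semidirect_measure[OF K_kernel prob_space_rho_x])

lemma sets_rho_z: "sets rho_z = sets (rho_x \<Otimes>\<^sub>M borel)"
  unfolding rho_z_eq by (rule sets_semidirect_measure[OF K_kernel prob_space_rho_x])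

lemma prob_space_sample: "prob_space sample"
  unfolding sample_eq
  by (rule prob_space_semidirect_measure[OF measurable_label_kernel prob_space_vertex_features])

lemma sets_sample: "sets sample = sets (vertex_features \<Otimes>\<^sub>M labels)"
  unfolding sample_eq
  by (rule sets_semidirect_measure[OF measurable_label_kernel prob_space_vertex_features])

lemma measurable_hyperedge_term:
  assumes h[measurable]: "h \<in> borel_measurable (rho_x \<Otimes>\<^sub>M borel)" and i: "i < n"
  shows "(\<lambda>\<omega>. h (xvec k edge i (fst \<omega>), snd \<omega> i)) \<in> borel_measurable (vertex_features \<Otimes>\<^sub>M labels)"
proof -
  have [measurable]: "(\<lambda>\<omega>. xvec k edge i (fst \<omega>)) \<in> vertex_features \<Otimes>\<^sub>M labels \<rightarrow>\<^sub>M rho_x"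
    using measurable_xvec[OF i] by measurable
  have [measurable]: "(\<lambda>\<omega>. snd \<omega> i) \<in> borel_measurable (vertex_features \<Otimes>\<^sub>M labels)"
    using i by (intro measurable_compose[OF measurable_snd measurable_component_singleton]) auto
  show ?thesis by measurable
qed

lemma measurable_weighted_emp_risk:
  assumes f[measurable]: "f \<in> borel_measurable rho_x"
  shows "weighted_emp_risk k n edge w f \<in> borel_measurable sample"
proof -
  have "(\<lambda>z. (f (fst z) - snd z)\<^sup>2) \<in> borel_measurable (rho_x \<Otimes>\<^sub>M borel)" by measurable
  from measurable_hyperedge_term[OF this]
  have "(\<lambda>\<omega>. (f (xvec k edge i (fst \<omega>)) - snd \<omega> i)\<^sup>2) \<in> borel_measurable (vertex_features \<Otimes>\<^sub>M labels)"
    if "i < n" for i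
    using that by simp
  then show ?thesis
    unfolding weighted_emp_risk_def measurable_cong_sets[OF sets_sample refl]
    by (intro borel_measurable_times measurable_const borel_measurable_sum) auto
qed

lemma nn_integral_label_kernel_exp_le:
  assumes \<Phi>: "\<Phi> \<in> space vertex_features" and E: "E \<subseteq> {..<n}"
    and w: "\<And>i. i \<in> E \<Longrightarrow> 0 < w i \<and> w i \<le> 1"
    and h[measurable]: "h \<in> borel_measurable (rho_x \<Otimes>\<^sub>M borel)"
  shows "(\<integral>\<^sup>+Y. exp (\<Sum>i\<in>E. w i * h (xvec k edge i \<Phi>, Y i)) \<partial>label_kernel \<Phi>)
    \<le> (\<Prod>i\<in>E. ennreal_powr (\<integral>\<^sup>+y. exp (h (xvec k edge i \<Phi>, y)) \<partial>K (xvec k edge i \<Phi>)) (w i))"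
proof -
  define x where "x i = xvec k edge i \<Phi>" for i
  have x_space: "x i \<in> space rho_x" if "i < n" for i
    unfolding x_def using measurable_space[OF measurable_xvec[OF that] \<Phi>] .
  have K_prob: "prob_space (K (x i))" if "i \<in> {..<n}" for i
    using that by (simp add: prob_space_K x_space)
  obtain N where "product_prob_space N" and N: "\<And>i. i \<in> {..<n} \<Longrightarrow> N i = K (x i)"
    using obtain_product_prob_space[of "{..<n}" "\<lambda>i. K (x i)", OF K_prob] by blast
  interpret N: product_prob_space N "{..<n}" by fact
  have h_section: "(\<lambda>y. h (x i, y)) \<in> borel_measurable (N i)" if "i < n" for i
    using measurable_compose[OF measurable_Pair1'[OF x_space[OF that]] h]
    unfolding N[simplified, OF that] measurable_cong_sets[OF sets_K[OF x_space[OF that]] refl] .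
  have kernel_eq: "label_kernel \<Phi> = PiM {..<n} N"
    by (intro PiM_cong) (simp_all add: N x_def)
  define F where "F i y = (if i \<in> E then ennreal_powr (exp (h (x i, y))) (w i) else 1)" for i y
  have F_meas: "F i \<in> borel_measurable (N i)" if "i < n" for i
  proof -
    note h_section[OF that, measurable]
    show ?thesis unfolding F_def by measurable
  qed
  have exp_sum_eq: "ennreal (exp (\<Sum>i\<in>E. w i * h (x i, Y i))) = (\<Prod>i<n. F i (Y i))" for Y
  proof -
    have "(\<Prod>i<n. F i (Y i)) = (\<Prod>i\<in>E. ennreal (exp (w i * h (x i, Y i))))"
      using E by (simp add: F_def ennreal_powr_exp prod.If_cases Int_absorb1)
    also have "\<dots> = ennreal (exp (\<Sum>i\<in>E. w i * h (x i, Y i)))"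
      using finite_subset[OF E] by (simp add: exp_sum prod_ennreal)
    finally show ?thesis ..
  qed
  have "(\<integral>\<^sup>+Y. exp (\<Sum>i\<in>E. w i * h (x i, Y i)) \<partial>label_kernel \<Phi>) = (\<Prod>i<n. \<integral>\<^sup>+y. F i y \<partial>N i)"
    unfolding kernel_eq exp_sum_eq by (intro N.product_nn_integral_prod F_meas) auto
  also have "\<dots> \<le> (\<Prod>i<n. if i \<in> E then ennreal_powr (\<integral>\<^sup>+y. exp (h (x i, y)) \<partial>N i) (w i) else 1)"
  proof (intro prod_mono_ennreal)
    fix i assume "i \<in> {..<n}"
    note h_section[of i, measurable]
    show "(\<integral>\<^sup>+y. F i y \<partial>N i) \<le> (if i \<in> E then ennreal_powr (\<integral>\<^sup>+y. exp (h (x i, y)) \<partial>N i) (w i) else 1)"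
      using w \<open>i \<in> {..<n}\<close>
      by (auto simp: F_def prob_space.emeasure_space_1[OF N.prob_space]
          intro!: nn_integral_ennreal_powr_le[OF N.prob_space])
  qed
  also have "\<dots> = (\<Prod>i\<in>E. ennreal_powr (\<integral>\<^sup>+y. exp (h (x i, y)) \<partial>K (x i)) (w i))"
    using E N by (simp add: prod.If_cases Int_absorb1 subset_iff cong: prod.cong)
  finally show ?thesis unfolding x_def .
qed

lemma nn_integral_xvec:
  assumes "i < n" and "u \<in> borel_measurable rho_x"
  shows "(\<integral>\<^sup>+\<Phi>. u (xvec k edge i \<Phi>) \<partial>vertex_features) = (\<integral>\<^sup>+x. u x \<partial>rho_x)"
proof -
  have "(\<integral>\<^sup>+x. u x \<partial>rho_x) = (\<integral>\<^sup>+x. u x \<partial>distr vertex_features rho_x (xvec k edge i))"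
    by (simp add: distr_xvec[OF assms(1)])
  also have "\<dots> = (\<integral>\<^sup>+\<Phi>. u (xvec k edge i \<Phi>) \<partial>vertex_features)"
    using assms(2) by (intro nn_integral_distr measurable_xvec assms(1)) simp
  finally show ?thesis ..
qed

lemma Finner_vertex_features:
  assumes feasible: "feasible_weighting k n edge w" and E: "E \<subseteq> {..<n}"
    and w: "\<And>i. i \<in> E \<Longrightarrow> 0 < w i" and u: "u \<in> borel_measurable rho_x"
  shows "(\<integral>\<^sup>+\<Phi>. (\<Prod>i\<in>E. ennreal_powr (u (xvec k edge i \<Phi>)) (w i)) \<partial>vertex_features)
    \<le> (\<Prod>i\<in>E. ennreal_powr (\<integral>\<^sup>+x. u x \<partial>rho_x) (w i))"
proof -
  have \<rho>_prob: "prob_space (\<rho> (fst jv))" if "jv \<in> vset k n edge" for jv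
    using that by (intro prob_space_rho vset_fst_less)
  obtain N where "product_prob_space N" and N: "\<And>jv. jv \<in> vset k n edge \<Longrightarrow> N jv = \<rho> (fst jv)"
    using obtain_product_prob_space[of "vset k n edge" "\<lambda>jv. \<rho> (fst jv)", OF \<rho>_prob] by blast
  interpret N: product_prob_space N "vset k n edge" by fact
  have vertex_features_eq: "vertex_features = PiM (vset k n edge) N"
    unfolding vertex_feat_measure_def by (intro PiM_cong) (simp_all add: N)
  have "(\<integral>\<^sup>+\<Phi>. (\<Prod>i\<in>E. ennreal_powr (u (xvec k edge i \<Phi>)) (w i)) \<partial>vertex_features)
      \<le> (\<Prod>i\<in>E. ennreal_powr (\<integral>\<^sup>+\<Phi>. u (xvec k edge i \<Phi>) \<partial>vertex_features) (w i))"
    unfolding vertex_features_eq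
  proof (rule N.Finner_nn_integral[where e = "\<lambda>i. {(j, edge i j) | j. j < k}"])
    show "finite (vset k n edge)" by (rule finite_vset)
    show "finite E" using E by (rule finite_subset) simp
    show "\<And>i. i \<in> E \<Longrightarrow> 0 < w i" by (rule w)
  next
    fix v assume "v \<in> vset k n edge"
    then obtain j v' where v: "v = (j, v')" and j: "j < k" by (auto simp: vset_def)
    have "sum w {i \<in> E. v \<in> {(j, edge i j) |j. j < k}} = sum w {i \<in> E. edge i j = v'}"
      using v j by (intro arg_cong[where f = "sum w"]) auto
    also have "\<dots> \<le> sum w {i. i < n \<and> edge i j = v'}"
      using E feasible by (intro sum_mono2) (auto simp: feasible_weighting_def)
    also have "\<dots> \<le> 1" using feasible j by (simp add: feasible_weighting_def)
    finally show "sum w {i \<in> E. v \<in> {(j, edge i j) |j. j < k}} \<le> 1" .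
  next
    fix i assume "i \<in> E"
    then have "i < n" using E by auto
    show "(\<lambda>\<Phi>. u (xvec k edge i \<Phi>)) \<in> borel_measurable (PiM (vset k n edge) N)"
      using measurable_compose[OF measurable_xvec[OF \<open>i < n\<close>] u] by (simp add: vertex_features_eq)
  next
    fix i and \<Phi> \<Psi> :: "nat \<times> nat \<Rightarrow> 'a" assume "\<And>v. v \<in> {(j, edge i j) |j. j < k} \<Longrightarrow> \<Phi> v = \<Psi> v"
    then have "xvec k edge i \<Phi> = xvec k edge i \<Psi>" by (auto simp: xvec_def)
    then show "u (xvec k edge i \<Phi>) = u (xvec k edge i \<Psi>)" by simp
  qed
  also have "\<dots> = (\<Prod>i\<in>E. ennreal_powr (\<integral>\<^sup>+x. u x \<partial>rho_x) (w i))"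
    using E u by (intro prod.cong refl) (auto simp: nn_integral_xvec)
  finally show ?thesis .
qed

lemma nn_integral_exp_weighted_sum_le:
  assumes feasible: "feasible_weighting k n edge w" and k: "0 < k"
    and h[measurable]: "h \<in> borel_measurable (rho_x \<Otimes>\<^sub>M borel)"
    and C: "(\<integral>\<^sup>+z. exp (h z) \<partial>rho_z) \<le> ennreal C"
  shows "(\<integral>\<^sup>+\<omega>. exp (\<Sum>i<n. w i * h (xvec k edge i (fst \<omega>), snd \<omega> i)) \<partial>sample)
    \<le> ennreal (C powr (\<Sum>i<n. w i))"
proof -
  define E where "E = {i. i < n \<and> 0 < w i}"
  have E: "E \<subseteq> {..<n}" and w_E: "\<And>i. i \<in> E \<Longrightarrow> 0 < w i \<and> w i \<le> 1"
    using feasible_weighting_le_1[OF feasible k] by (auto simp: E_def)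
  have sum_E: "(\<Sum>i<n. w i * a i) = (\<Sum>i\<in>E. w i * a i)" for a :: "nat \<Rightarrow> real"
    using feasible by (intro sum.mono_neutral_right) (auto simp: E_def feasible_weighting_def not_less)
  define U where "U x = (\<integral>\<^sup>+y. exp (h (x, y)) \<partial>K x)" for x
  have U_meas: "U \<in> borel_measurable rho_x"
    unfolding U_def
    by (rule nn_integral_measurable_subprob_algebra2[OF _ measurable_prob_algebraD[OF K_kernel]]) simp
  have int_U: "(\<integral>\<^sup>+x. U x \<partial>rho_x) = (\<integral>\<^sup>+z. exp (h z) \<partial>rho_z)"
    unfolding rho_z_eq U_def by (simp add: nn_integral_semidirect_measure[OF K_kernel])
  have "(\<lambda>z. ennreal (exp (h z))) \<in> borel_measurable rho_z"
    unfolding measurable_cong_sets[OF sets_rho_z refl] by measurable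
  then have "(\<integral>\<^sup>+z. exp (h z) \<partial>rho_z) \<noteq> 0"
    using prob_space.AE_False[OF prob_space_rho_z] by (simp add: nn_integral_0_iff_AE)
  then have C_pos: "0 < C" using C by (metis ennreal_eq_0_iff le_zero_eq not_le)
  have "(\<integral>\<^sup>+\<omega>. exp (\<Sum>i<n. w i * h (xvec k edge i (fst \<omega>), snd \<omega> i)) \<partial>sample)
      = (\<integral>\<^sup>+\<Phi>. \<integral>\<^sup>+Y. exp (\<Sum>i\<in>E. w i * h (xvec k edge i \<Phi>, Y i)) \<partial>label_kernel \<Phi> \<partial>vertex_features)"
  proof -
    have [measurable]: "(\<lambda>\<omega>. \<Sum>i\<in>E. w i * h (xvec k edge i (fst \<omega>), snd \<omega> i))
        \<in> borel_measurable (vertex_features \<Otimes>\<^sub>M labels)"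
      using E by (intro borel_measurable_sum borel_measurable_times measurable_const
          measurable_hyperedge_term h) auto
    show ?thesis unfolding sum_E sample_eq
      by (subst nn_integral_semidirect_measure[OF measurable_label_kernel]) simp_all
  qed
  also have "\<dots> \<le> (\<integral>\<^sup>+\<Phi>. (\<Prod>i\<in>E. ennreal_powr (U (xvec k edge i \<Phi>)) (w i)) \<partial>vertex_features)"
    unfolding U_def using E w_E by (intro nn_integral_mono nn_integral_label_kernel_exp_le h) auto
  also have "\<dots> \<le> (\<Prod>i\<in>E. ennreal_powr (\<integral>\<^sup>+z. exp (h z) \<partial>rho_z) (w i))"
    unfolding int_U[symmetric] using E w_E by (intro Finner_vertex_features feasible U_meas) auto
  also have "\<dots> \<le> (\<Prod>i\<in>E. ennreal_powr (ennreal C) (w i))"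
    using C w_E by (intro prod_mono_ennreal ennreal_powr_mono) (auto intro: less_imp_le)
  also have "\<dots> = ennreal (C powr (\<Sum>i<n. w i))"
    using sum_E[of "\<lambda>_. 1"] C_pos finite_subset[OF E]
    by (simp add: ennreal_powr_ennreal prod_ennreal powr_sum)
  finally show ?thesis .
qed

lemma prob_weighted_loss_less:
  assumes feasible: "feasible_weighting k n edge w" and k: "0 < k"
    and f[measurable]: "f \<in> borel_measurable rho_x" and M: "0 < M"
    and bounded: "AE z in rho_z. \<bar>f (fst z) - snd z\<bar> \<le> M" and \<epsilon>: "0 < \<epsilon>"
  defines "s \<equiv> \<Sum>i<n. w i"
  shows "measure sample {\<omega> \<in> space sample.
      (\<Sum>i<n. w i * (f (xvec k edge i (fst \<omega>)) - snd \<omega> i)\<^sup>2) < s * (expected_risk k \<rho> K f + \<epsilon>)}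
    \<ge> 1 - exp (- 2 * s * \<epsilon>\<^sup>2 / M ^ 4)"
proof -
  interpret S: prob_space sample by (rule prob_space_sample)
  interpret Z: prob_space rho_z by (rule prob_space_rho_z)
  define \<mu> where "\<mu> = expected_risk k \<rho> K f"
  define L where "L z = (f (fst z) - snd z)\<^sup>2" for z :: "(nat \<Rightarrow> 'a) \<times> real"
  define T where "T \<omega> = (\<Sum>i<n. w i * L (xvec k edge i (fst \<omega>), snd \<omega> i))" for \<omega>
  \<comment> \<open>The Chernoff parameter minimising the exponent obtained below.\<close>
  define l where "l = 4 * \<epsilon> / M ^ 4"
  have l_pos: "0 < l" using \<epsilon> M by (simp add: l_def)
  have L_meas[measurable]: "L \<in> borel_measurable (rho_x \<Otimes>\<^sub>M borel)"
    unfolding L_def by measurable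
  have L_bounded: "AE z in rho_z. L z \<in> {0..(M\<^sup>2)}"
    using bounded
  proof eventually_elim
    case (elim z)
    then have "\<bar>f (fst z) - snd z\<bar>\<^sup>2 \<le> M\<^sup>2" by (intro power_mono) auto
    then show ?case by (simp add: L_def)
  qed
  have "Z.expectation L = \<mu>"
    by (simp add: \<mu>_def expected_risk_def L_def[abs_def])
  moreover have "L \<in> borel_measurable rho_z"
    unfolding measurable_cong_sets[OF sets_rho_z refl] by (rule L_meas)
  ultimately have "(\<integral>\<^sup>+z. exp (l * L z) \<partial>rho_z) \<le> ennreal (exp (l * \<mu> + l\<^sup>2 * M ^ 4 / 8))"
    using Z.nn_integral_exp_le_Hoeffding[OF _ L_bounded l_pos] by (simp flip: power_mult)
  then have "(\<integral>\<^sup>+\<omega>. exp (\<Sum>i<n. w i * (l * L (xvec k edge i (fst \<omega>), snd \<omega> i))) \<partial>sample)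
      \<le> ennreal (exp (l * \<mu> + l\<^sup>2 * M ^ 4 / 8) powr s)"
    unfolding s_def by (intro nn_integral_exp_weighted_sum_le feasible k) simp_all
  then have moment: "(\<integral>\<^sup>+\<omega>. exp (l * T \<omega>) \<partial>sample) \<le> ennreal (exp (s * (l * \<mu> + l\<^sup>2 * M ^ 4 / 8)))"
    by (simp add: T_def sum_distrib_left powr_def mult_ac)
  have T_meas: "T \<in> borel_measurable sample"
    unfolding T_def measurable_cong_sets[OF sets_sample refl]
    by (intro borel_measurable_sum borel_measurable_times measurable_const measurable_hyperedge_term L_meas) auto
  have "S.prob {\<omega> \<in> space sample. s * (\<mu> + \<epsilon>) \<le> T \<omega>}
      \<le> exp (s * (l * \<mu> + l\<^sup>2 * M ^ 4 / 8) - l * (s * (\<mu> + \<epsilon>)))"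
    by (rule S.prob_ge_le_exp_moment[OF T_meas l_pos moment])
  also have "s * (l * \<mu> + l\<^sup>2 * M ^ 4 / 8) - l * (s * (\<mu> + \<epsilon>)) = - 2 * s * \<epsilon>\<^sup>2 / M ^ 4"
    using M by (simp add: l_def field_simps power2_eq_square)
  finally have "S.prob {\<omega> \<in> space sample. s * (\<mu> + \<epsilon>) \<le> T \<omega>} \<le> exp (- 2 * s * \<epsilon>\<^sup>2 / M ^ 4)" .
  moreover have "{\<omega> \<in> space sample. T \<omega> < s * (\<mu> + \<epsilon>)} = space sample - {\<omega> \<in> space sample. s * (\<mu> + \<epsilon>) \<le> T \<omega>}"
    by auto
  moreover have "{\<omega> \<in> space sample. s * (\<mu> + \<epsilon>) \<le> T \<omega>} \<in> S.events"
    using T_meas by measurable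
  ultimately show ?thesis
    by (simp add: S.prob_compl T_def L_def \<mu>_def)
qed


lemma prob_emp_risk_deviation:
  assumes feasible: "feasible_weighting k n edge w" and k: "0 < k"
    and f: "f \<in> borel_measurable rho_x" and M: "0 < M"
    and bounded: "AE z in rho_z. \<bar>f (fst z) - snd z\<bar> \<le> M" and \<epsilon>: "0 < \<epsilon>"
    and s: "(\<Sum>i<n. w i) = s_number k n edge"
  shows "measure sample {\<omega> \<in> space sample.
      expected_risk k \<rho> K f - weighted_emp_risk k n edge w f \<omega> \<ge> - \<epsilon>}
    \<ge> 1 - exp (- 2 * s_number k n edge * \<epsilon>\<^sup>2 / M ^ 4)"
proof (cases "s_number k n edge = 0")
  case True
  then show ?thesis by simp
next
  case False
  interpret S: prob_space sample by (rule prob_space_sample)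
  have "0 \<le> s_number k n edge"
    using feasible_weighting_sum_nonneg[OF feasible] s by simp
  with False have s_pos: "0 < s_number k n edge" by simp
  define T where "T \<omega> = (\<Sum>i<n. w i * (f (xvec k edge i (fst \<omega>)) - snd \<omega> i)\<^sup>2)" for \<omega>
  have event: "{\<omega> \<in> space sample. expected_risk k \<rho> K f - weighted_emp_risk k n edge w f \<omega> \<ge> - \<epsilon>}
      \<in> sets sample"
    using measurable_weighted_emp_risk[OF f] by measurable
  have "1 - exp (- 2 * s_number k n edge * \<epsilon>\<^sup>2 / M ^ 4)
      \<le> measure sample {\<omega> \<in> space sample. T \<omega> < s_number k n edge * (expected_risk k \<rho> K f + \<epsilon>)}"
    using prob_weighted_loss_less[OF feasible k f M bounded \<epsilon>] by (simp add: s T_def)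
  also have "\<dots> \<le> measure sample {\<omega> \<in> space sample.
      expected_risk k \<rho> K f - weighted_emp_risk k n edge w f \<omega> \<ge> - \<epsilon>}"
  proof (intro S.finite_measure_mono event subsetI)
    fix \<omega> assume "\<omega> \<in> {\<omega> \<in> space sample. T \<omega> < s_number k n edge * (expected_risk k \<rho> K f + \<epsilon>)}"
    then have "\<omega> \<in> space sample" and "T \<omega> / s_number k n edge < expected_risk k \<rho> K f + \<epsilon>"
      using s_pos by (auto simp: pos_divide_less_eq mult.commute)
    then show "\<omega> \<in> {\<omega> \<in> space sample. expected_risk k \<rho> K f - weighted_emp_risk k n edge w f \<omega> \<ge> - \<epsilon>}"
      by (simp add: weighted_emp_risk_def T_def)
  qed
  finally show ?thesis .
qed

end

theorem lemma4:
  fixes k n :: nat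
    and edge :: "nat \<Rightarrow> nat \<Rightarrow> nat"
    and X :: "nat \<Rightarrow> 'a::metric_space set"
    and \<rho> :: "nat \<Rightarrow> 'a measure"
    and K :: "(nat \<Rightarrow> 'a) \<Rightarrow> real measure"
    and f :: "(nat \<Rightarrow> 'a) \<Rightarrow> real"
    and w :: "nat \<Rightarrow> real"
    and M \<epsilon> :: real
  assumes k_pos: "0 < k"
    and distinct_edges: "\<forall>i<n. \<forall>i'<n. (\<forall>j<k. edge i j = edge i' j) \<longrightarrow> i = i'"
    and X_compact: "\<forall>j<k. compact (X j)"
    and rho_sets: "\<forall>j<k. sets (\<rho> j) = sets (restrict_space borel (X j))"
    and rho_prob: "\<forall>j<k. prob_space (\<rho> j)"
    and K_kernel: "K \<in> measurable (feat_measure k \<rho>) (prob_algebra borel)"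
    and f_meas: "f \<in> borel_measurable (feat_measure k \<rho>)"
    and M_pos: "0 < M"
    and f_bounded: "AE z in joint_measure k \<rho> K. \<bar>f (fst z) - snd z\<bar> \<le> M"
    and w_opt: "optimal_weighting k n edge w"
    and eps_pos: "0 < \<epsilon>"
  shows "measure (sample_measure k n edge \<rho> K)
           {\<omega> \<in> space (sample_measure k n edge \<rho> K).
              expected_risk k \<rho> K f - weighted_emp_risk k n edge w f \<omega> \<ge> - \<epsilon>}
         \<ge> 1 - exp (- (s_number k n edge * \<epsilon>\<^sup>2) / (2 * M ^ 4))"
proof -
  interpret networked_sample k n edge \<rho> K
    using rho_prob K_kernel by (intro networked_sample.intro) simp_all
  define s where "s = s_number k n edge"
  have feasible: "feasible_weighting k n edge w" and s_eq: "(\<Sum>i<n. w i) = s"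
    using w_opt by (auto simp: optimal_weighting_def s_def)
  have "0 \<le> s"
    using feasible_weighting_sum_nonneg[OF feasible] s_eq by simp
  then have "0 \<le> s * \<epsilon>\<^sup>2 / M ^ 4" by simp
  moreover have "- 2 * s * \<epsilon>\<^sup>2 / M ^ 4 = - 2 * (s * \<epsilon>\<^sup>2 / M ^ 4)"
    and "- (s * \<epsilon>\<^sup>2) / (2 * M ^ 4) = - (s * \<epsilon>\<^sup>2 / M ^ 4) / 2" by simp_all
  ultimately have "- 2 * s * \<epsilon>\<^sup>2 / M ^ 4 \<le> - (s * \<epsilon>\<^sup>2) / (2 * M ^ 4)" by linarith
  then have "1 - exp (- (s * \<epsilon>\<^sup>2) / (2 * M ^ 4)) \<le> 1 - exp (- 2 * s * \<epsilon>\<^sup>2 / M ^ 4)"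
    by simp
  also have "\<dots> \<le> measure sample {\<omega> \<in> space sample.
      expected_risk k \<rho> K f - weighted_emp_risk k n edge w f \<omega> \<ge> - \<epsilon>}"
    using prob_emp_risk_deviation[OF feasible k_pos f_meas M_pos f_bounded eps_pos] s_eq
    by (simp add: s_def)
  finally show ?thesis by (simp add: s_def)
qed

end
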